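(* Let $N\ge1$, $\sigma>0$, let $\psi:[0,2]\to[0,+\infty)$ be a decreasing $C^1$ function with $\psi(2)=0$ and $\psi'(2)<0$, and let $(x_i,v_i)_{i=1}^N$ be the solution of $$\dot x_i=v_i,\qquad \dot v_i=-\frac{\|v_i\|^2}{\|x_i\|^2}x_i+\sum_{j=1}^N\frac{\psi_{ij}}{N}\big(R(x_j,x_i)v_j-v_i\big)+\sum_{k=1}^N\frac{\sigma}{N}\big(\|x_i\|^2x_k-\langle x_i,x_k\rangle x_i\big),\quad \psi_{ij}=\psi(\|x_i-x_j\|),$$ with initial data satisfying $\|x_i(0)\|=1$, $\langle v_i(0),x_i(0)\rangle=0$ for all $i$. If $2\sigma>N^2\mathcal{E}(0)$, then $\frac{d}{dt}v_i$ and $\frac{d}{dt}\big(R(x_j,x_i)v_j\big)$ are bounded on $[0,\infty)$ for all $i,j\in\{1,\dots,N\}$.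
   Context: $\|\cdot\|$ is the Euclidean norm, $\langle\cdot,\cdot\rangle$ the inner product on $\mathbb{R}^3$. For column vectors $x_1,x_2$ in the unit sphere with $x_1\ne-x_2$, $R(x_1,x_2)=I$ if $x_1=x_2$, and otherwise $R(x_1,x_2)=\langle x_1,x_2\rangle I-x_1x_2^T+x_2x_1^T+(1-\langle x_1,x_2\rangle)uu^T$, $u=\frac{x_1\times x_2}{\|x_1\times x_2\|}$; $\psi_{ij}R(x_j,x_i)v_j:=0$ when $x_j=-x_i$. The energy is $\mathcal{E}=\frac1N\sum_{k=1}^N\|v_k\|^2+\frac{\sigma}{2N^2}\sum_{k,l=1}^N\|x_k-x_l\|^2$. *)

theory Defs
  imports "HOL-Analysis.Analysis" "HOL-Analysis.Cross3"
begin

definition outer3 :: "real^3 \<Rightarrow> real^3 \<Rightarrow> real^3^3" where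
  "outer3 x y = (\<chi> a b. x $ a * y $ b)"

definition Rot :: "real^3 \<Rightarrow> real^3 \<Rightarrow> real^3^3" where
  "Rot x1 x2 = (if x1 = x2 then mat 1 else
     (let u = (1 / norm (cross3 x1 x2)) *\<^sub>R cross3 x1 x2 in
       (x1 \<bullet> x2) *\<^sub>R mat 1 - outer3 x1 x2 + outer3 x2 x1
       + (1 - x1 \<bullet> x2) *\<^sub>R outer3 u u))"

definition psiR :: "(real \<Rightarrow> real) \<Rightarrow> real^3 \<Rightarrow> real^3 \<Rightarrow> real^3 \<Rightarrow> real^3" where
  "psiR \<psi> xi xj vj = (if xj = - xi then 0 else \<psi> (norm (xi - xj)) *\<^sub>R (Rot xj xi *v vj))"

text \<open>Right-hand side of the velocity equation for particle i (particles indexed by 0..<N).\<close>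
definition vrhs :: "nat \<Rightarrow> real \<Rightarrow> (real \<Rightarrow> real) \<Rightarrow> (nat \<Rightarrow> real^3) \<Rightarrow> (nat \<Rightarrow> real^3) \<Rightarrow> nat \<Rightarrow> real^3" where
  "vrhs N \<sigma> \<psi> x v i =
     - ((norm (v i))\<^sup>2 / (norm (x i))\<^sup>2) *\<^sub>R x i
     + (\<Sum>j<N. (1 / real N) *\<^sub>R (psiR \<psi> (x i) (x j) (v j) - \<psi> (norm (x i - x j)) *\<^sub>R v i))
     + (\<Sum>k<N. (\<sigma> / real N) *\<^sub>R ((norm (x i))\<^sup>2 *\<^sub>R x k - (x i \<bullet> x k) *\<^sub>R x i))"

definition energy :: "nat \<Rightarrow> real \<Rightarrow> (nat \<Rightarrow> real^3) \<Rightarrow> (nat \<Rightarrow> real^3) \<Rightarrow> real" where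
  "energy N \<sigma> x v = (1 / real N) * (\<Sum>k<N. (norm (v k))\<^sup>2)
     + \<sigma> / (2 * (real N)\<^sup>2) * (\<Sum>k<N. \<Sum>l<N. (norm (x k - x l))\<^sup>2)"

end

theory Submission
  imports Defs
begin

(* As long as every particle stays on the unit sphere with tangent velocity, the
   energy is non-increasing: the attraction term exactly balances the potential energy, and the
   alignment term is dissipative because R(x_j,x_i) is an isometry and the weights psi_ij are
   symmetric. The energy then bounds all speeds by sqrt (N E(0)) and all squared mutual distances
   by 2 N^2 E(0) / sigma < 4, so no two particles come close to being antipodal. Under these
   bounds the radial velocities x_i . v_i satisfy a homogeneous linear differential inequality,
   hence stay 0, and |x_i| stays 1; a continuation argument makes all of this global. Finally, on
   the sphere and away from antipodal pairs, R(x_j,x_i) v_j is given by a smooth closed formula,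
   whose derivative is bounded because it is continuous on a compact set of admissible states. *)

lemma nonneg_real_continuation:
  fixes P :: "real \<Rightarrow> bool"
  assumes "P 0"
    and limit: "\<And>T. 0 < T \<Longrightarrow> (\<And>s. 0 \<le> s \<Longrightarrow> s < T \<Longrightarrow> P s) \<Longrightarrow> P T"
    and extend: "\<And>T. 0 \<le> T \<Longrightarrow> (\<And>s. 0 \<le> s \<Longrightarrow> s \<le> T \<Longrightarrow> P s) \<Longrightarrow>
                   \<exists>h>0. \<forall>s. T \<le> s \<and> s \<le> T + h \<longrightarrow> P s"
    and "0 \<le> t"
  shows "P t"
proof (rule ccontr)
  assume "\<not> P t"
  define G where "G = {u. 0 \<le> u \<and> (\<forall>s. 0 \<le> s \<and> s \<le> u \<longrightarrow> P s)}"
  have "0 \<in> G"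
    using \<open>P 0\<close> by (auto simp: G_def)
  have "u < t" if "u \<in> G" for u
    using that \<open>\<not> P t\<close> \<open>0 \<le> t\<close> by (force simp: G_def)
  then have bdd: "bdd_above G"
    unfolding bdd_above_def using less_imp_le by blast
  define T where "T = Sup G"
  have "0 \<le> T"
    unfolding T_def using cSup_upper[OF \<open>0 \<in> G\<close> bdd] .
  have before_T: "P s" if "0 \<le> s" "s < T" for s
  proof -
    obtain u where "u \<in> G" "s < u"
      using less_cSup_iff[of G s] \<open>0 \<in> G\<close> bdd \<open>s < T\<close> unfolding T_def by auto
    then show ?thesis
      using that by (auto simp: G_def)
  qed
  have upto_T: "P s" if "0 \<le> s" "s \<le> T" for s
  proof (cases "s < T")
    case False
    then have "s = T"
      using that by simp
    then show ?thesis
      using \<open>P 0\<close> before_T limit \<open>0 \<le> T\<close> by (cases "T = 0") auto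
  qed (use before_T that in auto)
  obtain h where "h > 0" and beyond_T: "\<forall>s. T \<le> s \<and> s \<le> T + h \<longrightarrow> P s"
    using extend[OF \<open>0 \<le> T\<close> upto_T] by blast
  have "P s" if "0 \<le> s" "s \<le> T + h" for s
    using upto_T beyond_T that by (cases "s \<le> T") auto
  then have "T + h \<in> G"
    unfolding G_def using \<open>0 \<le> T\<close> \<open>h > 0\<close> by simp
  then show False
    using cSup_upper[OF _ bdd] \<open>h > 0\<close> unfolding T_def by fastforce
qed

lemma continuous_on_eq_const_at_right_end:
  fixes g :: "real \<Rightarrow> 'a::t2_space"
  assumes "continuous_on {a..b} g" "a < b" "\<And>s. a \<le> s \<Longrightarrow> s < b \<Longrightarrow> g s = c"
  shows "g b = c"
proof -
  have "closed {s \<in> {a..b}. g s = c}"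
    by (rule continuous_closed_preimage_constant[OF assms(1) closed_atLeastAtMost])
  moreover have "{a..<b} \<subseteq> {s \<in> {a..b}. g s = c}"
    using assms(3) by auto
  ultimately have "closure {a..<b} \<subseteq> {s \<in> {a..b}. g s = c}"
    by (rule closure_minimal[rotated])
  moreover have "b \<in> closure {a..<b}"
    using assms(2) by simp
  ultimately show ?thesis
    by blast
qed

lemma vanishing_on_short_interval:
  fixes b b' :: "'i \<Rightarrow> real \<Rightarrow> real"
  assumes "finite I" "0 \<le> K" "real (card I) * K * h < 1"
    and deriv: "\<And>i s. i \<in> I \<Longrightarrow> s \<in> {a..a+h} \<Longrightarrow>
                  (b i has_real_derivative b' i s) (at s within {a..a+h})"
    and deriv_bound: "\<And>i s. i \<in> I \<Longrightarrow> s \<in> {a..a+h} \<Longrightarrow> \<bar>b' i s\<bar> \<le> K * (\<Sum>j\<in>I. \<bar>b j s\<bar>)"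
    and initial: "\<And>i. i \<in> I \<Longrightarrow> b i a = 0"
    and "i \<in> I" "s \<in> {a..a+h}"
  shows "b i s = 0"
proof -
  define S where "S s = (\<Sum>j\<in>I. \<bar>b j s\<bar>)" for s
  have "continuous_on {a..a+h} (b j)" if "j \<in> I" for j
    using deriv[OF that] DERIV_continuous continuous_on_eq_continuous_within by blast
  then have "continuous_on {a..a+h} S"
    unfolding S_def by (intro continuous_intros) auto
  then obtain s0 where "s0 \<in> {a..a+h}" and max: "\<And>s. s \<in> {a..a+h} \<Longrightarrow> S s \<le> S s0"
    using continuous_attains_sup[of "{a..a+h}" S] \<open>s \<in> {a..a+h}\<close> by fastforce
  define M where "M = S s0"
  have "0 \<le> M"
    unfolding M_def S_def by (simp add: sum_nonneg)
  have small: "\<bar>b j r\<bar> \<le> K * M * h" if "j \<in> I" "r \<in> {a..a+h}" for j r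
  proof -
    have "norm (b j r - b j a) \<le> K * M * norm (r - a)"
    proof (rule field_differentiable_bound[where S = "{a..r}"])
      fix u assume "u \<in> {a..r}"
      then have "u \<in> {a..a+h}" "{a..r} \<subseteq> {a..a+h}"
        using that(2) by auto
      then show "(b j has_real_derivative b' j u) (at u within {a..r})"
        using deriv[OF \<open>j \<in> I\<close>] DERIV_subset by blast
      have "K * S u \<le> K * M"
        using max[OF \<open>u \<in> {a..a+h}\<close>] \<open>0 \<le> K\<close> unfolding M_def by (rule mult_left_mono)
      then show "norm (b' j u) \<le> K * M"
        using deriv_bound[OF \<open>j \<in> I\<close> \<open>u \<in> {a..a+h}\<close>] unfolding S_def real_norm_def by linarith
    qed (use that(2) in auto)
    also have "\<dots> \<le> K * M * h"
      using that(2) \<open>0 \<le> K\<close> \<open>0 \<le> M\<close> by (intro mult_left_mono) auto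
    finally show ?thesis
      using initial[OF that(1)] by simp
  qed
  have "M = (\<Sum>j\<in>I. \<bar>b j s0\<bar>)"
    unfolding M_def S_def ..
  also have "\<dots> \<le> (\<Sum>j\<in>I. K * M * h)"
    using small \<open>s0 \<in> {a..a+h}\<close> by (intro sum_mono)
  also have "\<dots> = (real (card I) * K * h) * M"
    by simp
  finally have "M = 0"
    using \<open>0 \<le> M\<close> assms(3) by (smt (verit) mult_le_cancel_right1)
  then show ?thesis
    using max[OF \<open>s \<in> {a..a+h}\<close>] member_le_sum[OF \<open>i \<in> I\<close>, of "\<lambda>j. \<bar>b j s\<bar>"] \<open>finite I\<close>
    unfolding M_def S_def by simp
qed

lemma has_real_derivative_inner:
  fixes a b :: "real \<Rightarrow> 'a::real_inner"
  assumes "(a has_vector_derivative a') (at t within S)" "(b has_vector_derivative b') (at t within S)"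
  shows "((\<lambda>s. a s \<bullet> b s) has_real_derivative a t \<bullet> b' + a' \<bullet> b t) (at t within S)"
  unfolding has_real_derivative_iff_has_vector_derivative
  using bounded_bilinear.has_vector_derivative[OF bounded_bilinear_inner assms] .

subsection \<open>Rotations between unit vectors\<close>

lemma outer3_mult_vec: "outer3 x y *v v = (y \<bullet> v) *\<^sub>R x"
  by (simp add: outer3_def matrix_vector_mult_def vec_eq_iff inner_vec_def sum_3 algebra_simps)

lemma Rot_mult_vec: "Rot x1 x2 *v v = (if x1 = x2 then v else
   (x1 \<bullet> x2) *\<^sub>R v - (x2 \<bullet> v) *\<^sub>R x1 + (x1 \<bullet> v) *\<^sub>R x2
   + ((1 - x1 \<bullet> x2) * (cross3 x1 x2 \<bullet> v) / (norm (cross3 x1 x2))\<^sup>2) *\<^sub>R cross3 x1 x2)"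
  by (simp add: Rot_def Let_def matrix_vector_mult_add_rdistrib matrix_vector_mult_diff_rdistrib
      scaleR_matrix_vector_assoc[symmetric] outer3_mult_vec power2_eq_square)

lemma inner_Rot_mult_vec:
  "x2 \<bullet> (Rot x1 x2 *v v) = (if x1 = x2 then x2 \<bullet> v else (x2 \<bullet> x2) * (x1 \<bullet> v))"
  by (simp add: Rot_mult_vec inner_add_right inner_diff_right dot_cross_self inner_commute)

lemma norm_diff_unit_mem_0_2:
  fixes a b :: "'a::real_normed_vector"
  shows "norm a = 1 \<Longrightarrow> norm b = 1 \<Longrightarrow> norm (a - b) \<in> {0..2}"
  using norm_triangle_ineq4[of a b] by simp

lemma norm_diff_squared_unit:
  assumes "norm x1 = 1" "norm x2 = 1"
  shows "(norm (x1 - x2))\<^sup>2 = 2 - 2 * (x1 \<bullet> x2)"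
proof -
  have "x1 \<bullet> x1 = 1" "x2 \<bullet> x2 = 1"
    using assms by (simp_all add: dot_square_norm)
  then show ?thesis
    by (simp add: power2_norm_eq_inner inner_diff_left inner_diff_right inner_commute)
qed

lemma one_plus_inner_pos_unit:
  assumes "norm x1 = 1" "norm x2 = 1" "x1 \<noteq> - x2"
  shows "0 < 1 + x1 \<bullet> x2"
proof -
  have "(norm (x1 + x2))\<^sup>2 = 2 + 2 * (x1 \<bullet> x2)"
    using norm_diff_squared_unit[of x1 "- x2"] assms(1,2) by simp
  moreover have "0 < (norm (x1 + x2))\<^sup>2"
    using assms(3) by (simp add: eq_neg_iff_add_eq_0)
  ultimately show ?thesis
    by linarith
qed

lemma norm_cross3_squared_unit:
  assumes "norm x1 = 1" "norm x2 = 1"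
  shows "(norm (cross3 x1 x2))\<^sup>2 = (1 - x1 \<bullet> x2) * (1 + x1 \<bullet> x2)"
  using norm_cross_dot[of x1 x2] assms by (simp add: algebra_simps power2_eq_square)

text \<open>For unit vectors with x1 \<noteq> - x2, the identity |x1 \<times> x2|^2 = (1 - x1 \<bullet> x2)(1 + x1 \<bullet> x2)
  turns Rot x1 x2 *v v into the following expression, which unlike Rot is smooth wherever
  1 + x1 \<bullet> x2 \<noteq> 0.\<close>
definition rotate :: "real^3 \<Rightarrow> real^3 \<Rightarrow> real^3 \<Rightarrow> real^3" where
  "rotate x1 x2 v = (x1 \<bullet> x2) *\<^sub>R v - (x2 \<bullet> v) *\<^sub>R x1 + (x1 \<bullet> v) *\<^sub>R x2
     + ((cross3 x1 x2 \<bullet> v) / (1 + x1 \<bullet> x2)) *\<^sub>R cross3 x1 x2"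

lemma Rot_mult_vec_eq_rotate:
  assumes "norm x1 = 1" "norm x2 = 1" "x1 \<noteq> - x2"
  shows "Rot x1 x2 *v v = rotate x1 x2 v"
proof (cases "x1 = x2")
  case True
  then show ?thesis
    using assms by (simp add: Rot_mult_vec rotate_def power2_norm_eq_inner[symmetric])
next
  case False
  have "0 < 1 + x1 \<bullet> x2" "0 < 1 + x1 \<bullet> - x2"
    using one_plus_inner_pos_unit assms False by (metis norm_minus_cancel minus_minus)+
  then show ?thesis
    using False by (simp add: Rot_mult_vec rotate_def norm_cross3_squared_unit[OF assms(1,2)])
qed

lemma norm_rotate:
  assumes "norm x1 = 1" "norm x2 = 1" "1 + x1 \<bullet> x2 \<noteq> 0"
  shows "norm (rotate x1 x2 v) = norm v"
proof -
  define c a b w where "c = x1 \<bullet> x2" and "a = x1 \<bullet> v" and "b = x2 \<bullet> v" and "w = cross3 x1 x2"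
  define q where "q = (w \<bullet> v) / (1 + c)"
  have unit: "x1 \<bullet> x1 = 1" "x2 \<bullet> x2 = 1"
    using assms by (simp_all add: power2_norm_eq_inner[symmetric])
  have w_orth: "x1 \<bullet> w = 0" "x2 \<bullet> w = 0" "w \<bullet> x1 = 0" "w \<bullet> x2 = 0"
    unfolding w_def using dot_cross_self by (auto simp: inner_commute)
  have ww: "w \<bullet> w = 1 - c\<^sup>2"
    using norm_cross_dot[of x1 x2] assms unfolding w_def c_def by (simp add: power2_norm_eq_inner)
  have "(w \<bullet> v)\<^sup>2 = (x1 \<bullet> x1) * (x2 \<bullet> x2) * (v \<bullet> v) + 2 * a * b * c
      - (x1 \<bullet> x1) * b\<^sup>2 - (x2 \<bullet> x2) * a\<^sup>2 - (v \<bullet> v) * c\<^sup>2"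
    unfolding w_def a_def b_def c_def by (simp add: cross3_simps power2_eq_square)
  then have gram: "(w \<bullet> v)\<^sup>2 = (v \<bullet> v) * (1 - c\<^sup>2) - a\<^sup>2 - b\<^sup>2 + 2 * a * b * c"
    by (simp add: unit algebra_simps)
  have expand: "rotate x1 x2 v = c *\<^sub>R v - b *\<^sub>R x1 + a *\<^sub>R x2 + q *\<^sub>R w"
    unfolding rotate_def c_def a_def b_def w_def q_def ..
  have "rotate x1 x2 v \<bullet> rotate x1 x2 v
      = c\<^sup>2 * (v \<bullet> v) + a\<^sup>2 + b\<^sup>2 - 2 * a * b * c + q\<^sup>2 * (1 - c\<^sup>2) + 2 * c * q * (w \<bullet> v)"
    unfolding expand
    by (simp add: inner_add_left inner_add_right inner_diff_left inner_diff_right unit w_orth ww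
        inner_commute a_def b_def c_def power2_eq_square algebra_simps)
  also have "\<dots> = v \<bullet> v"
  proof -
    have wv: "w \<bullet> v = q * (1 + c)"
      using assms(3) unfolding q_def c_def by simp
    have "q\<^sup>2 * (1 - c\<^sup>2) + 2 * c * q * (w \<bullet> v) = (w \<bullet> v)\<^sup>2"
      unfolding wv by (simp add: power2_eq_square algebra_simps)
    then show ?thesis
      using gram by (simp add: algebra_simps)
  qed
  finally show ?thesis
    by (simp add: norm_eq_sqrt_inner)
qed

definition rotate_deriv ::
    "real^3 \<Rightarrow> real^3 \<Rightarrow> real^3 \<Rightarrow> real^3 \<Rightarrow> real^3 \<Rightarrow> real^3 \<Rightarrow> real^3" where
  "rotate_deriv x1 x2 v x1' x2' v' =
     (x1 \<bullet> x2) *\<^sub>R v' + (x1 \<bullet> x2' + x1' \<bullet> x2) *\<^sub>R v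
   - ((x2 \<bullet> v) *\<^sub>R x1' + (x2 \<bullet> v' + x2' \<bullet> v) *\<^sub>R x1)
   + ((x1 \<bullet> v) *\<^sub>R x2' + (x1 \<bullet> v' + x1' \<bullet> v) *\<^sub>R x2)
   + (((cross3 x1 x2 \<bullet> v) / (1 + x1 \<bullet> x2)) *\<^sub>R (cross3 x1 x2' + cross3 x1' x2)
   + (((cross3 x1 x2 \<bullet> v' + (cross3 x1 x2' + cross3 x1' x2) \<bullet> v) * (1 + x1 \<bullet> x2)
        - (cross3 x1 x2 \<bullet> v) * (x1 \<bullet> x2' + x1' \<bullet> x2)) / ((1 + x1 \<bullet> x2) * (1 + x1 \<bullet> x2)))
       *\<^sub>R cross3 x1 x2)"

lemma has_vector_derivative_rotate:
  assumes x1: "(x1 has_vector_derivative x1') (at t within S)"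
    and x2: "(x2 has_vector_derivative x2') (at t within S)"
    and v: "(v has_vector_derivative v') (at t within S)"
    and nonzero: "1 + x1 t \<bullet> x2 t \<noteq> 0"
  shows "((\<lambda>s. rotate (x1 s) (x2 s) (v s)) has_vector_derivative
           rotate_deriv (x1 t) (x2 t) (v t) x1' x2' v') (at t within S)"
proof -
  have cross: "((\<lambda>s. cross3 (x1 s) (x2 s)) has_vector_derivative
      (cross3 (x1 t) x2' + cross3 x1' (x2 t))) (at t within S)"
    using bilinear_cross bilinear_conv_bounded_bilinear
    by (blast intro: bounded_bilinear.has_vector_derivative x1 x2)
  have denom: "((\<lambda>s. 1 + x1 s \<bullet> x2 s) has_real_derivative (x1 t \<bullet> x2' + x1' \<bullet> x2 t)) (at t within S)"
    using DERIV_add[OF DERIV_const has_real_derivative_inner[OF x1 x2]] by simp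
  note quotient = DERIV_divide[OF has_real_derivative_inner[OF cross v] denom nonzero]
  show ?thesis
    unfolding rotate_def rotate_deriv_def
    by (intro has_vector_derivative_add has_vector_derivative_diff has_vector_derivative_scaleR
        has_real_derivative_inner x1 x2 v cross quotient)
qed

lemma rotate_deriv_bounded:
  assumes "0 < \<delta>"
  obtains B where "\<And>x1 x2 v x1' x2' v'. norm x1 \<le> L \<Longrightarrow> norm x2 \<le> L \<Longrightarrow> norm v \<le> L \<Longrightarrow>
    norm x1' \<le> L \<Longrightarrow> norm x2' \<le> L \<Longrightarrow> norm v' \<le> L \<Longrightarrow> \<delta> \<le> 1 + x1 \<bullet> x2 \<Longrightarrow>
    norm (rotate_deriv x1 x2 v x1' x2' v') \<le> B"
proof -
  define g where "g z = rotate_deriv (fst z) (fst (snd z)) (fst (snd (snd z)))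
    (fst (snd (snd (snd z)))) (fst (snd (snd (snd (snd z))))) (snd (snd (snd (snd (snd z)))))" for z
  define C :: "(real^3) set" where "C = cball 0 L"
  define K where "K = (C \<times> C \<times> C \<times> C \<times> C \<times> C) \<inter> {z. \<delta> \<le> 1 + fst z \<bullet> fst (snd z)}"
  have "compact K"
    unfolding K_def C_def
    by (intro compact_Int_closed compact_Times compact_cball closed_Collect_le continuous_intros)
  moreover have "continuous_on K g"
    unfolding g_def rotate_deriv_def
    by (intro continuous_intros continuous_on_cross) (use assms in \<open>auto simp: K_def\<close>)
  ultimately obtain B where B: "\<forall>y\<in>g ` K. norm y \<le> B"
    using compact_continuous_image compact_imp_bounded bounded_iff by metis
  show ?thesis
  proof (rule that)
    fix x1 x2 v x1' x2' v' :: "real^3"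
    assume "norm x1 \<le> L" "norm x2 \<le> L" "norm v \<le> L" "norm x1' \<le> L" "norm x2' \<le> L"
      "norm v' \<le> L" "\<delta> \<le> 1 + x1 \<bullet> x2"
    then have "(x1, x2, v, x1', x2', v') \<in> K"
      by (simp add: K_def C_def)
    then show "norm (rotate_deriv x1 x2 v x1' x2' v') \<le> B"
      using B by (force simp: g_def)
  qed
qed

lemma norm_psiR_le:
  assumes "norm xi = 1" "norm xj = 1"
  shows "norm (psiR \<psi> xi xj vj) \<le> \<bar>\<psi> (norm (xi - xj))\<bar> * norm vj"
proof (cases "xj = - xi")
  case False
  then have "1 + xj \<bullet> xi \<noteq> 0"
    using one_plus_inner_pos_unit[OF assms(2,1)] by simp
  then show ?thesis
    using False by (simp add: psiR_def Rot_mult_vec_eq_rotate[OF assms(2,1)] norm_rotate[OF assms(2,1)])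
qed (simp add: psiR_def)

lemma abs_inner_psiR_le:
  "\<bar>xi \<bullet> psiR \<psi> xi xj vj\<bar> \<le> \<bar>\<psi> (norm (xi - xj))\<bar> * max 1 (xi \<bullet> xi) * \<bar>xj \<bullet> vj\<bar>"
proof (cases "xj = - xi")
  case False
  have "\<bar>xi \<bullet> (Rot xj xi *v vj)\<bar> \<le> max 1 (xi \<bullet> xi) * \<bar>xj \<bullet> vj\<bar>"
    using mult_right_mono[of 1 "max 1 (xi \<bullet> xi)" "\<bar>xi \<bullet> vj\<bar>"]
    by (auto simp: inner_Rot_mult_vec abs_mult intro: mult_right_mono)
  then show ?thesis
    using False by (simp add: psiR_def abs_mult mult.assoc mult_left_mono)
qed (simp add: psiR_def)

locale sphere_flocking =
  fixes N :: nat and \<sigma> :: real and \<psi> :: "real \<Rightarrow> real"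
    and x v :: "nat \<Rightarrow> real \<Rightarrow> real^3"
  assumes N: "N \<ge> 1" and sigma: "\<sigma> > 0"
    and psi_nonneg: "\<forall>r\<in>{0..2}. \<psi> r \<ge> 0"
    and psi_decr: "antimono_on {0..2} \<psi>"
    and xdot: "\<forall>i<N. \<forall>t\<ge>0. (x i has_vector_derivative v i t) (at t within {0..})"
    and vdot: "\<forall>i<N. \<forall>t\<ge>0. (v i has_vector_derivative
                  vrhs N \<sigma> \<psi> (\<lambda>k. x k t) (\<lambda>k. v k t) i) (at t within {0..})"
    and init_norm: "\<forall>i<N. norm (x i 0) = 1"
    and init_tan: "\<forall>i<N. v i 0 \<bullet> x i 0 = 0"
    and energy_small: "2 * \<sigma> > (real N)\<^sup>2 * energy N \<sigma> (\<lambda>k. x k 0) (\<lambda>k. v k 0)"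
begin

definition "accel i t = vrhs N \<sigma> \<psi> (\<lambda>k. x k t) (\<lambda>k. v k t) i"

definition "E t = energy N \<sigma> (\<lambda>k. x k t) (\<lambda>k. v k t)"

definition "tangent_on_sphere t \<longleftrightarrow> (\<forall>i<N. norm (x i t) = 1 \<and> x i t \<bullet> v i t = 0)"

lemma N_pos: "real N > 0"
  using N by simp

lemma x_deriv: "i < N \<Longrightarrow> 0 \<le> t \<Longrightarrow> (x i has_vector_derivative v i t) (at t within {0..})"
  using xdot by simp

lemma v_deriv: "i < N \<Longrightarrow> 0 \<le> t \<Longrightarrow> (v i has_vector_derivative accel i t) (at t within {0..})"
  using vdot by (simp add: accel_def)

lemma psi_bounds: "r \<in> {0..2} \<Longrightarrow> 0 \<le> \<psi> r \<and> \<psi> r \<le> \<psi> 0"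
  using psi_nonneg monotone_onD[OF psi_decr, of 0 r] by auto

subsection \<open>Energy dissipation\<close>

definition "energy_rate t = (2 / real N) * (\<Sum>k<N. v k t \<bullet> accel k t)
   + \<sigma> / (real N)\<^sup>2 * (\<Sum>k<N. \<Sum>l<N. (x k t - x l t) \<bullet> (v k t - v l t))"

lemma E_has_derivative:
  assumes "0 \<le> t"
  shows "(E has_real_derivative energy_rate t) (at t within {0..})"
proof -
  have E_eq: "E = (\<lambda>s. (1 / real N) * (\<Sum>k<N. v k s \<bullet> v k s)
     + \<sigma> / (2 * (real N)\<^sup>2) * (\<Sum>k<N. \<Sum>l<N. (x k s - x l s) \<bullet> (x k s - x l s)))"
    unfolding E_def energy_def by (simp add: power2_norm_eq_inner)
  have "((\<lambda>s. v k s \<bullet> v k s) has_real_derivative 2 * (v k t \<bullet> accel k t)) (at t within {0..})"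
    if "k < N" for k
    using has_real_derivative_inner[OF v_deriv v_deriv, OF that assms that assms]
    by (simp add: inner_commute)
  moreover have "((\<lambda>s. (x k s - x l s) \<bullet> (x k s - x l s)) has_real_derivative
      2 * ((x k t - x l t) \<bullet> (v k t - v l t))) (at t within {0..})" if "k < N" "l < N" for k l
  proof -
    have "((\<lambda>s. x k s - x l s) has_vector_derivative (v k t - v l t)) (at t within {0..})"
      using x_deriv that assms by (intro has_vector_derivative_diff)
    from has_real_derivative_inner[OF this this] show ?thesis
      by (simp add: inner_commute)
  qed
  ultimately have "(E has_real_derivative (1 / real N) * (\<Sum>k<N. 2 * (v k t \<bullet> accel k t))
     + \<sigma> / (2 * (real N)\<^sup>2) * (\<Sum>k<N. \<Sum>l<N. 2 * ((x k t - x l t) \<bullet> (v k t - v l t))))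
     (at t within {0..})"
    unfolding E_eq by (intro DERIV_add DERIV_cmult DERIV_sum) auto
  then show ?thesis
    by (simp add: energy_rate_def sum_distrib_left[symmetric])
qed

lemma alignment_dissipative:
  assumes "tangent_on_sphere t"
  shows "(\<Sum>k<N. \<Sum>j<N. v k t \<bullet> psiR \<psi> (x k t) (x j t) (v j t)
            - \<psi> (norm (x k t - x j t)) * (norm (v k t))\<^sup>2) \<le> 0"
proof -
  define w where "w k j = \<psi> (norm (x k t - x j t))" for k j
  have w_sym: "w k j = w j k" for k j
    unfolding w_def by (simp add: norm_minus_commute)
  have pair: "v k t \<bullet> psiR \<psi> (x k t) (x j t) (v j t) \<le> w k j * ((norm (v k t))\<^sup>2 + (norm (v j t))\<^sup>2) / 2"
    if "k < N" "j < N" for k j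
  proof -
    have unit: "norm (x k t) = 1" "norm (x j t) = 1"
      using assms that unfolding tangent_on_sphere_def by auto
    then have "0 \<le> w k j"
      unfolding w_def using psi_bounds norm_diff_unit_mem_0_2 by blast
    have "v k t \<bullet> psiR \<psi> (x k t) (x j t) (v j t) \<le> norm (v k t) * (w k j * norm (v j t))"
      using norm_cauchy_schwarz[of "v k t"] norm_psiR_le[OF unit] \<open>0 \<le> w k j\<close>
      unfolding w_def by (smt (verit) mult_left_mono norm_ge_zero)
    also have "\<dots> \<le> w k j * ((norm (v k t))\<^sup>2 + (norm (v j t))\<^sup>2) / 2"
      using \<open>0 \<le> w k j\<close> mult_left_mono[OF sum_squares_bound[of "norm (v k t)" "norm (v j t)"], of "w k j"]
      by (simp add: algebra_simps power2_eq_square)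
    finally show ?thesis .
  qed
  have "(\<Sum>k<N. \<Sum>j<N. v k t \<bullet> psiR \<psi> (x k t) (x j t) (v j t) - w k j * (norm (v k t))\<^sup>2)
     \<le> (\<Sum>k<N. \<Sum>j<N. w k j * (norm (v j t))\<^sup>2 / 2 - w k j * (norm (v k t))\<^sup>2 / 2)"
    using pair by (intro sum_mono) (simp add: field_simps)
  also have "\<dots> = 0"
    by (simp add: sum_subtractf sum.swap[of "\<lambda>k j. w k j * (norm (v j t))\<^sup>2 / 2"] w_sym)
  finally show ?thesis
    unfolding w_def .
qed

lemma inner_velocity_accel:
  assumes "tangent_on_sphere t" "k < N"
  shows "v k t \<bullet> accel k t = (1 / real N) * (\<Sum>j<N. v k t \<bullet> psiR \<psi> (x k t) (x j t) (v j t)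
            - \<psi> (norm (x k t - x j t)) * (norm (v k t))\<^sup>2) + (\<sigma> / real N) * (\<Sum>l<N. v k t \<bullet> x l t)"
proof -
  have "norm (x k t) = 1" "v k t \<bullet> x k t = 0"
    using assms unfolding tangent_on_sphere_def by (auto simp: inner_commute)
  then show ?thesis
    by (simp add: accel_def vrhs_def inner_add_right inner_sum_right inner_diff_right
        power2_norm_eq_inner sum_distrib_left right_diff_distrib)
qed

lemma energy_rate_eq:
  assumes "tangent_on_sphere t"
  shows "energy_rate t = 2 / (real N)\<^sup>2 * (\<Sum>k<N. \<Sum>j<N. v k t \<bullet> psiR \<psi> (x k t) (x j t) (v j t)
            - \<psi> (norm (x k t - x j t)) * (norm (v k t))\<^sup>2)"
proof -
  define D where "D = (\<Sum>k<N. \<Sum>j<N. v k t \<bullet> psiR \<psi> (x k t) (x j t) (v j t)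
            - \<psi> (norm (x k t - x j t)) * (norm (v k t))\<^sup>2)"
  define P where "P = (\<Sum>k<N. \<Sum>l<N. v k t \<bullet> x l t)"
  have "(\<Sum>k<N. v k t \<bullet> accel k t) = D / real N + (\<sigma> / real N) * P"
    using inner_velocity_accel[OF assms]
    by (simp add: D_def P_def sum.distrib sum_distrib_left sum_divide_distrib)
  moreover have "(\<Sum>k<N. \<Sum>l<N. (x k t - x l t) \<bullet> (v k t - v l t)) = - 2 * P"
  proof -
    have "x k t \<bullet> v k t = 0" if "k < N" for k
      using assms that unfolding tangent_on_sphere_def by auto
    then have "(\<Sum>k<N. \<Sum>l<N. (x k t - x l t) \<bullet> (v k t - v l t))
        = - (\<Sum>k<N. \<Sum>l<N. v l t \<bullet> x k t) - P"
      unfolding P_def by (simp add: inner_diff_left inner_diff_right inner_commute sum_subtractf sum_negf)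
    also have "(\<Sum>k<N. \<Sum>l<N. v l t \<bullet> x k t) = P"
      unfolding P_def by (rule sum.swap)
    finally show ?thesis
      by simp
  qed
  ultimately show ?thesis
    unfolding energy_rate_def D_def[symmetric] using N_pos by (simp add: field_simps power2_eq_square)
qed

lemma energy_decreasing:
  assumes "0 \<le> T" "\<And>s. 0 \<le> s \<Longrightarrow> s \<le> T \<Longrightarrow> tangent_on_sphere s"
  shows "E T \<le> E 0"
proof -
  have "(E has_derivative (*) (energy_rate s)) (at s within {0..T})" if "0 \<le> s" "s \<le> T" for s
    using E_has_derivative[of s] that unfolding has_field_derivative_def[symmetric]
    by (auto intro: DERIV_subset)
  then obtain s where "s \<in> {0..T}" "E T - E 0 = energy_rate s * (T - 0)"
    using mvt_very_simple[OF assms(1), of E "\<lambda>s. (*) (energy_rate s)"] by blast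
  moreover have "tangent_on_sphere s"
    using assms(2) \<open>s \<in> {0..T}\<close> by simp
  then have "energy_rate s \<le> 0"
    by (simp add: energy_rate_eq alignment_dissipative divide_nonpos_nonneg)
  ultimately show ?thesis
    using assms(1) mult_nonpos_nonneg[of "energy_rate s" T] by simp
qed

subsection \<open>Energy bounds\<close>

lemma kinetic_le_E: "(1 / real N) * (\<Sum>k<N. (norm (v k t))\<^sup>2) \<le> E t"
  and potential_le_E: "\<sigma> / (2 * (real N)\<^sup>2) * (\<Sum>k<N. \<Sum>l<N. (norm (x k t - x l t))\<^sup>2) \<le> E t"
  using sigma by (simp_all add: E_def energy_def sum_nonneg)

lemma speed_squared_bound:
  assumes "E t \<le> E 0" "k < N"
  shows "(norm (v k t))\<^sup>2 \<le> real N * E 0"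
proof -
  have "(norm (v k t))\<^sup>2 \<le> (\<Sum>k<N. (norm (v k t))\<^sup>2)"
    using assms(2) by (intro member_le_sum) auto
  also have "\<dots> \<le> real N * E t"
    using kinetic_le_E[of t] N_pos by (simp add: field_simps)
  also have "\<dots> \<le> real N * E 0"
    using assms(1) by (simp add: mult_left_mono)
  finally show ?thesis .
qed

definition "dist_squared_bound = 2 * (real N)\<^sup>2 * E 0 / \<sigma>"

text \<open>This is where the smallness condition 2 \<sigma> > N^2 E(0) enters: it keeps the particles
  uniformly away from antipodal configurations.\<close>
lemma dist_squared_bound_lt_4: "dist_squared_bound < 4"
  using energy_small sigma by (simp add: dist_squared_bound_def E_def field_simps)

lemma dist_squared_bound:
  assumes "E t \<le> E 0" "k < N" "l < N"
  shows "(norm (x k t - x l t))\<^sup>2 \<le> dist_squared_bound"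
proof -
  have "(norm (x k t - x l t))\<^sup>2 \<le> (\<Sum>l<N. (norm (x k t - x l t))\<^sup>2)"
    using assms(3) by (intro member_le_sum) auto
  also have "\<dots> \<le> (\<Sum>k<N. \<Sum>l<N. (norm (x k t - x l t))\<^sup>2)"
    using assms(2) member_le_sum[of k "{..<N}" "\<lambda>k. \<Sum>l<N. (norm (x k t - x l t))\<^sup>2"]
    by (simp add: sum_nonneg)
  also have "\<dots> \<le> 2 * (real N)\<^sup>2 * E t / \<sigma>"
    using potential_le_E[of t] sigma N_pos by (simp add: field_simps)
  also have "\<dots> \<le> dist_squared_bound"
    using assms(1) sigma unfolding dist_squared_bound_def by (simp add: divide_right_mono mult_left_mono)
  finally show ?thesis .
qed

subsection \<open>Invariance of the tangent bundle of the sphere\<close>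

lemma x_continuous: "i < N \<Longrightarrow> continuous_on {0..} (x i)"
  using x_deriv by (intro continuous_on_vector_derivative) auto

lemma v_continuous: "i < N \<Longrightarrow> continuous_on {0..} (v i)"
  using v_deriv by (intro continuous_on_vector_derivative) auto

text \<open>The attraction term is orthogonal to x_i and the centripetal term cancels |v_i|^2,
  so only the alignment term contributes to the rate of change of x_i \<bullet> v_i.\<close>
lemma tangency_rate_eq:
  assumes "x i s \<noteq> 0"
  shows "x i s \<bullet> accel i s + v i s \<bullet> v i s = (1 / real N) *
    (\<Sum>j<N. x i s \<bullet> psiR \<psi> (x i s) (x j s) (v j s) - \<psi> (norm (x i s - x j s)) * (x i s \<bullet> v i s))"
  using assms
  by (simp add: accel_def vrhs_def inner_add_right inner_sum_right inner_diff_right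
      power2_norm_eq_inner sum_distrib_left right_diff_distrib mult.commute)

lemma tangency_rate_bound:
  assumes "i < N" "x i s \<noteq> 0" "x i s \<bullet> x i s \<le> 3" "\<And>j. j < N \<Longrightarrow> norm (x i s - x j s) \<le> 2"
  shows "\<bar>x i s \<bullet> accel i s + v i s \<bullet> v i s\<bar> \<le> 4 * \<psi> 0 * (\<Sum>j<N. \<bar>x j s \<bullet> v j s\<bar>)"
proof -
  define S where "S = (\<Sum>j<N. \<bar>x j s \<bullet> v j s\<bar>)"
  have "0 \<le> \<psi> 0"
    using psi_bounds[of 0] by simp
  have "\<bar>x i s \<bullet> v i s\<bar> \<le> S"
    unfolding S_def using assms(1) by (intro member_le_sum) auto
  have term_bound: "\<bar>x i s \<bullet> psiR \<psi> (x i s) (x j s) (v j s) - \<psi> (norm (x i s - x j s)) * (x i s \<bullet> v i s)\<bar>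
      \<le> 3 * \<psi> 0 * \<bar>x j s \<bullet> v j s\<bar> + \<psi> 0 * \<bar>x i s \<bullet> v i s\<bar>" if "j < N" for j
  proof -
    have psi: "0 \<le> \<psi> (norm (x i s - x j s))" "\<psi> (norm (x i s - x j s)) \<le> \<psi> 0"
      using psi_bounds assms(4)[OF that] by auto
    have "\<bar>\<psi> (norm (x i s - x j s))\<bar> * max 1 (x i s \<bullet> x i s) \<le> \<psi> 0 * 3"
      using psi assms(3) by (intro mult_mono) auto
    then have "\<bar>x i s \<bullet> psiR \<psi> (x i s) (x j s) (v j s)\<bar> \<le> \<psi> 0 * 3 * \<bar>x j s \<bullet> v j s\<bar>"
      using abs_inner_psiR_le[of "x i s" \<psi> "x j s" "v j s"] by (meson abs_ge_zero mult_right_mono order_trans)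
    moreover have "\<bar>\<psi> (norm (x i s - x j s)) * (x i s \<bullet> v i s)\<bar> \<le> \<psi> 0 * \<bar>x i s \<bullet> v i s\<bar>"
      using psi by (simp add: abs_mult mult_right_mono)
    ultimately show ?thesis
      by linarith
  qed
  have "\<bar>x i s \<bullet> accel i s + v i s \<bullet> v i s\<bar>
      \<le> (1 / real N) * (\<Sum>j<N. 3 * \<psi> 0 * \<bar>x j s \<bullet> v j s\<bar> + \<psi> 0 * \<bar>x i s \<bullet> v i s\<bar>)"
  proof -
    have "\<bar>\<Sum>j<N. x i s \<bullet> psiR \<psi> (x i s) (x j s) (v j s) - \<psi> (norm (x i s - x j s)) * (x i s \<bullet> v i s)\<bar>
        \<le> (\<Sum>j<N. 3 * \<psi> 0 * \<bar>x j s \<bullet> v j s\<bar> + \<psi> 0 * \<bar>x i s \<bullet> v i s\<bar>)"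
      using term_bound by (intro order_trans[OF sum_abs sum_mono]) auto
    then show ?thesis
      unfolding tangency_rate_eq[OF assms(2)] abs_mult using N_pos by (simp add: divide_right_mono)
  qed
  also have "\<dots> = 3 * \<psi> 0 * S / real N + \<psi> 0 * \<bar>x i s \<bullet> v i s\<bar>"
    using N_pos by (simp add: S_def sum.distrib sum_distrib_left field_simps)
  also have "\<dots> \<le> 3 * \<psi> 0 * S / 1 + \<psi> 0 * S"
    using N \<open>0 \<le> \<psi> 0\<close> \<open>\<bar>x i s \<bullet> v i s\<bar> \<le> S\<close>
    by (intro add_mono divide_left_mono mult_left_mono) (auto simp: S_def sum_nonneg)
  finally show ?thesis
    unfolding S_def by simp
qed

lemma near_sphere:
  assumes "0 \<le> T" "tangent_on_sphere T" "E T \<le> E 0"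
  obtains d where "0 < d" "\<And>s i j. T \<le> s \<Longrightarrow> s < T + d \<Longrightarrow> i < N \<Longrightarrow> j < N \<Longrightarrow>
    1/2 < norm (x i s) \<and> norm (x i s) < 3/2 \<and> norm (x i s - x j s) < 2"
proof -
  define near where "near s \<longleftrightarrow> (\<forall>i\<in>{..<N}. \<forall>j\<in>{..<N}.
      1/2 < norm (x i s) \<and> norm (x i s) < 3/2 \<and> norm (x i s - x j s) < 2)" for s
  have lim: "(x i \<longlongrightarrow> x i T) (at T within {0..})" if "i < N" for i
    using x_continuous[OF that] \<open>0 \<le> T\<close> unfolding continuous_on_def by simp
  have unit: "norm (x i T) = 1" if "i < N" for i
    using assms(2) that unfolding tangent_on_sphere_def by simp
  have apart: "norm (x i T - x j T) < 2" if "i < N" "j < N" for i j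
  proof -
    have "(norm (x i T - x j T))\<^sup>2 < 2\<^sup>2"
      using dist_squared_bound[OF assms(3) that] dist_squared_bound_lt_4 by simp
    then show ?thesis
      by (rule power_less_imp_less_base) simp
  qed
  have "near T"
    unfolding near_def using unit apart by simp
  have "\<forall>\<^sub>F s in at T within {0..}.
      1/2 < norm (x i s) \<and> norm (x i s) < 3/2 \<and> norm (x i s - x j s) < 2" if "i < N" "j < N" for i j
  proof (intro eventually_conj)
    show "\<forall>\<^sub>F s in at T within {0..}. 1/2 < norm (x i s)" "\<forall>\<^sub>F s in at T within {0..}. norm (x i s) < 3/2"
      using order_tendstoD[OF tendsto_norm[OF lim[OF that(1)]], of "1/2"]
        order_tendstoD[OF tendsto_norm[OF lim[OF that(1)]], of "3/2"] unit[OF that(1)]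
      by simp_all
    show "\<forall>\<^sub>F s in at T within {0..}. norm (x i s - x j s) < 2"
      using order_tendstoD(2)[OF tendsto_norm[OF tendsto_diff[OF lim[OF that(1)] lim[OF that(2)]]]]
        apart[OF that] by simp
  qed
  then have "\<forall>\<^sub>F s in at T within {0..}. near s"
    unfolding near_def by (intro eventually_ball_finite ballI) auto
  then obtain d where "0 < d" and d: "\<And>s. s \<in> {0..} \<Longrightarrow> s \<noteq> T \<Longrightarrow> dist s T < d \<Longrightarrow> near s"
    unfolding eventually_at by blast
  have "near s" if "T \<le> s" "s < T + d" for s
    using d[of s] \<open>near T\<close> that \<open>0 \<le> T\<close> by (cases "s = T") (auto simp: dist_real_def)
  then show ?thesis
    using that[OF \<open>0 < d\<close>] unfolding near_def by blast
qed

lemma radial_velocity_has_derivative: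
  "i < N \<Longrightarrow> 0 \<le> s \<Longrightarrow> ((\<lambda>s. x i s \<bullet> v i s) has_real_derivative
     x i s \<bullet> accel i s + v i s \<bullet> v i s) (at s within {0..})"
  using has_real_derivative_inner[OF x_deriv[of i s] v_deriv[of i s]] by simp

lemma norm_position_constant:
  assumes "i < N" "0 \<le> T" "\<And>r. r \<in> {T..T+h} \<Longrightarrow> x i r \<bullet> v i r = 0" "s \<in> {T..T+h}"
  shows "norm (x i s) = norm (x i T)"
proof -
  have "norm (x i s \<bullet> x i s - x i T \<bullet> x i T) \<le> 0 * norm (s - T)"
  proof (rule field_differentiable_bound[where S = "{T..T+h}"])
    fix r assume "r \<in> {T..T+h}"
    then show "((\<lambda>s. x i s \<bullet> x i s) has_real_derivative x i r \<bullet> v i r + v i r \<bullet> x i r)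
        (at r within {T..T+h})"
      using has_real_derivative_inner[OF x_deriv[of i r] x_deriv[of i r]] assms(1,2)
      by (auto intro: DERIV_subset)
    show "norm (x i r \<bullet> v i r + v i r \<bullet> x i r) \<le> 0"
      using assms(3)[OF \<open>r \<in> {T..T+h}\<close>] by (simp add: inner_commute)
  qed (use assms(4) in auto)
  then have "(norm (x i s))\<^sup>2 = (norm (x i T))\<^sup>2"
    by (simp add: dot_square_norm)
  then show ?thesis
    by (simp add: power2_eq_iff_nonneg)
qed

lemma radial_velocity_vanishes:
  assumes "0 \<le> T" "tangent_on_sphere T" "real N * (4 * \<psi> 0) * h < 1"
    and near: "\<And>s i j. T \<le> s \<Longrightarrow> s \<le> T + h \<Longrightarrow> i < N \<Longrightarrow> j < N \<Longrightarrow>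
      1/2 < norm (x i s) \<and> norm (x i s) < 3/2 \<and> norm (x i s - x j s) < 2"
    and "i < N" "s \<in> {T..T+h}"
  shows "x i s \<bullet> v i s = 0"
proof (rule vanishing_on_short_interval[where I = "{..<N}" and K = "4 * \<psi> 0" and a = T and h = h
      and b = "\<lambda>i s. x i s \<bullet> v i s" and b' = "\<lambda>i s. x i s \<bullet> accel i s + v i s \<bullet> v i s"])
  fix j r assume "j \<in> {..<N}" "r \<in> {T..T+h}"
  then show "((\<lambda>s. x j s \<bullet> v j s) has_real_derivative x j r \<bullet> accel j r + v j r \<bullet> v j r)
      (at r within {T..T+h})"
    using radial_velocity_has_derivative[of j r] \<open>0 \<le> T\<close> by (auto intro: DERIV_subset)
  note near_r = near[of r j, OF _ _ \<open>j \<in> {..<N}\<close>[simplified]]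
  have "x j r \<noteq> 0" "norm (x j r) \<le> 3/2"
    using near_r \<open>j \<in> {..<N}\<close> \<open>r \<in> {T..T+h}\<close> by fastforce+
  moreover have "norm (x j r) * norm (x j r) \<le> 3/2 * (3/2)"
    using \<open>norm (x j r) \<le> 3/2\<close> by (intro mult_mono) auto
  then have "x j r \<bullet> x j r \<le> 3"
    by (simp add: dot_square_norm power2_eq_square)
  ultimately show "\<bar>x j r \<bullet> accel j r + v j r \<bullet> v j r\<bar> \<le> 4 * \<psi> 0 * (\<Sum>l\<in>{..<N}. \<bar>x l r \<bullet> v l r\<bar>)"
    using near_r \<open>j \<in> {..<N}\<close> \<open>r \<in> {T..T+h}\<close> by (intro tangency_rate_bound) (auto simp: less_imp_le)
qed (use assms psi_bounds[of 0] in \<open>auto simp: tangent_on_sphere_def\<close>)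

lemma tangent_on_sphere_extend:
  assumes "0 \<le> T" "\<And>s. 0 \<le> s \<Longrightarrow> s \<le> T \<Longrightarrow> tangent_on_sphere s"
  shows "\<exists>h>0. \<forall>s. T \<le> s \<and> s \<le> T + h \<longrightarrow> tangent_on_sphere s"
proof -
  have "tangent_on_sphere T"
    using assms by simp
  then obtain d where "0 < d" and near: "\<And>s i j. T \<le> s \<Longrightarrow> s < T + d \<Longrightarrow> i < N \<Longrightarrow> j < N \<Longrightarrow>
      1/2 < norm (x i s) \<and> norm (x i s) < 3/2 \<and> norm (x i s - x j s) < 2"
    using near_sphere energy_decreasing assms by blast
  define K where "K = 4 * \<psi> 0"
  define h where "h = min (d / 2) (1 / (real N * K + 1))"
  have "0 \<le> K"
    unfolding K_def using psi_bounds[of 0] by simp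
  have "0 < h"
    unfolding h_def using \<open>0 < d\<close> \<open>0 \<le> K\<close> by (simp add: add_nonneg_pos)
  have "real N * K * h \<le> real N * K * (1 / (real N * K + 1))"
    unfolding h_def using \<open>0 \<le> K\<close> by (intro mult_left_mono) auto
  also have "\<dots> < 1"
    using \<open>0 \<le> K\<close> by (simp add: divide_less_eq add_nonneg_pos)
  finally have "real N * K * h < 1" .
  moreover have "T + h < T + d"
    unfolding h_def using \<open>0 < d\<close> by simp
  ultimately have radial_zero: "x i s \<bullet> v i s = 0" if "i < N" "s \<in> {T..T+h}" for i s
    using radial_velocity_vanishes[OF assms(1) \<open>tangent_on_sphere T\<close>, of h] near that
    unfolding K_def by fastforce
  then have "norm (x i s) = 1" if "i < N" "s \<in> {T..T+h}" for i s
    using norm_position_constant[OF that(1) assms(1) _ that(2)] that(1) \<open>tangent_on_sphere T\<close>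
    unfolding tangent_on_sphere_def by simp
  then show ?thesis
    using \<open>0 < h\<close> radial_zero unfolding tangent_on_sphere_def by auto
qed

lemma tangent_on_sphere_limit:
  assumes "0 < T" "\<And>s. 0 \<le> s \<Longrightarrow> s < T \<Longrightarrow> tangent_on_sphere s"
  shows "tangent_on_sphere T"
  unfolding tangent_on_sphere_def
proof (intro allI impI conjI)
  fix i assume "i < N"
  then have "continuous_on {0..T} (x i)" "continuous_on {0..T} (v i)"
    using continuous_on_subset[OF x_continuous] continuous_on_subset[OF v_continuous] by auto
  then have "continuous_on {0..T} (\<lambda>s. norm (x i s))" "continuous_on {0..T} (\<lambda>s. x i s \<bullet> v i s)"
    by (auto intro: continuous_intros)
  then show "norm (x i T) = 1" "x i T \<bullet> v i T = 0"
    using assms \<open>i < N\<close> unfolding tangent_on_sphere_def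
    by (auto intro: continuous_on_eq_const_at_right_end[where a = 0])
qed

lemma tangent_on_sphere_forever:
  assumes "0 \<le> t"
  shows "tangent_on_sphere t"
proof (rule nonneg_real_continuation[OF _ tangent_on_sphere_limit tangent_on_sphere_extend assms])
  show "tangent_on_sphere 0"
    using init_norm init_tan by (simp add: tangent_on_sphere_def inner_commute)
qed

subsection \<open>Uniform bounds\<close>

lemma unit_position: "0 \<le> t \<Longrightarrow> i < N \<Longrightarrow> norm (x i t) = 1"
  using tangent_on_sphere_forever unfolding tangent_on_sphere_def by blast

lemma E_le_E0: "0 \<le> t \<Longrightarrow> E t \<le> E 0"
  using energy_decreasing tangent_on_sphere_forever by blast

definition "speed_bound = sqrt (real N * E 0)"

lemma speed_le: "0 \<le> t \<Longrightarrow> k < N \<Longrightarrow> norm (v k t) \<le> speed_bound"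
  unfolding speed_bound_def using speed_squared_bound[OF E_le_E0] by (simp add: real_le_rsqrt)

definition "antipodal_gap = 2 - dist_squared_bound / 2"

lemma antipodal_gap_pos: "0 < antipodal_gap"
  using dist_squared_bound_lt_4 by (simp add: antipodal_gap_def)

lemma antipodal_gap_le:
  assumes "0 \<le> t" "i < N" "j < N"
  shows "antipodal_gap \<le> 1 + x i t \<bullet> x j t"
  using dist_squared_bound[OF E_le_E0[OF assms(1)] assms(2,3)]
    norm_diff_squared_unit[OF unit_position[OF assms(1,2)] unit_position[OF assms(1,3)]]
  by (simp add: antipodal_gap_def)

lemma not_antipodal: "0 \<le> t \<Longrightarrow> i < N \<Longrightarrow> j < N \<Longrightarrow> x i t \<noteq> - x j t"
  using antipodal_gap_le[of t i j] antipodal_gap_pos unit_position[of t j]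
  by (auto simp: dot_square_norm)

lemma norm_alignment_le:
  assumes "0 \<le> t" "i < N"
  shows "norm (\<Sum>j<N. (1 / real N) *\<^sub>R (psiR \<psi> (x i t) (x j t) (v j t)
      - \<psi> (norm (x i t - x j t)) *\<^sub>R v i t)) \<le> 2 * \<psi> 0 * speed_bound"
proof -
  have "norm ((1 / real N) *\<^sub>R (psiR \<psi> (x i t) (x j t) (v j t) - \<psi> (norm (x i t - x j t)) *\<^sub>R v i t))
      \<le> (1 / real N) * (2 * \<psi> 0 * speed_bound)" if "j < N" for j
  proof -
    have unit: "norm (x i t) = 1" "norm (x j t) = 1"
      using unit_position assms that by blast+
    then have psi: "0 \<le> \<psi> (norm (x i t - x j t))" "\<psi> (norm (x i t - x j t)) \<le> \<psi> 0"
      using psi_bounds norm_diff_unit_mem_0_2 by blast+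
    have "norm (psiR \<psi> (x i t) (x j t) (v j t)) \<le> \<bar>\<psi> (norm (x i t - x j t))\<bar> * norm (v j t)"
      by (rule norm_psiR_le[OF unit])
    also have "\<dots> \<le> \<psi> 0 * speed_bound"
      using psi speed_le[OF assms(1) that] by (intro mult_mono) auto
    finally have "norm (psiR \<psi> (x i t) (x j t) (v j t)) \<le> \<psi> 0 * speed_bound" .
    moreover have "norm (\<psi> (norm (x i t - x j t)) *\<^sub>R v i t) \<le> \<psi> 0 * speed_bound"
      using psi speed_le[OF assms] by (simp add: mult_mono)
    ultimately have "norm (psiR \<psi> (x i t) (x j t) (v j t) - \<psi> (norm (x i t - x j t)) *\<^sub>R v i t)
        \<le> 2 * \<psi> 0 * speed_bound"
      using norm_triangle_ineq4[of "psiR \<psi> (x i t) (x j t) (v j t)" "\<psi> (norm (x i t - x j t)) *\<^sub>R v i t"]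
      by linarith
    then show ?thesis
      using N_pos by (simp add: divide_right_mono)
  qed
  then have "norm (\<Sum>j<N. (1 / real N) *\<^sub>R (psiR \<psi> (x i t) (x j t) (v j t)
      - \<psi> (norm (x i t - x j t)) *\<^sub>R v i t)) \<le> (\<Sum>j<N. (1 / real N) * (2 * \<psi> 0 * speed_bound))"
    by (intro sum_norm_le) simp
  then show ?thesis
    using N_pos by simp
qed

lemma norm_attraction_le:
  assumes "0 \<le> t" "i < N"
  shows "norm (\<Sum>k<N. (\<sigma> / real N) *\<^sub>R ((norm (x i t))\<^sup>2 *\<^sub>R x k t - (x i t \<bullet> x k t) *\<^sub>R x i t))
      \<le> 2 * \<sigma>"
proof -
  have "norm ((\<sigma> / real N) *\<^sub>R ((norm (x i t))\<^sup>2 *\<^sub>R x k t - (x i t \<bullet> x k t) *\<^sub>R x i t))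
      \<le> \<sigma> / real N * 2" if "k < N" for k
  proof -
    have unit: "norm (x i t) = 1" "norm (x k t) = 1"
      using unit_position assms that by blast+
    then have "\<bar>x i t \<bullet> x k t\<bar> \<le> 1"
      using Cauchy_Schwarz_ineq2[of "x i t" "x k t"] by simp
    then have "norm ((norm (x i t))\<^sup>2 *\<^sub>R x k t - (x i t \<bullet> x k t) *\<^sub>R x i t) \<le> 2"
      using norm_triangle_ineq4[of "x k t" "(x i t \<bullet> x k t) *\<^sub>R x i t"] unit by simp
    then show ?thesis
      using sigma N_pos by (simp add: mult_left_mono divide_right_mono)
  qed
  then have "norm (\<Sum>k<N. (\<sigma> / real N) *\<^sub>R ((norm (x i t))\<^sup>2 *\<^sub>R x k t - (x i t \<bullet> x k t) *\<^sub>R x i t))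
      \<le> (\<Sum>k<N. \<sigma> / real N * 2)"
    by (intro sum_norm_le) simp
  then show ?thesis
    using N_pos by simp
qed

definition "accel_bound = real N * E 0 + 2 * \<psi> 0 * speed_bound + 2 * \<sigma>"

lemma norm_accel_le:
  assumes "0 \<le> t" "i < N"
  shows "norm (accel i t) \<le> accel_bound"
proof -
  define radial where "radial = - ((norm (v i t))\<^sup>2 / (norm (x i t))\<^sup>2) *\<^sub>R x i t"
  define alignment where "alignment = (\<Sum>j<N. (1 / real N) *\<^sub>R (psiR \<psi> (x i t) (x j t) (v j t)
      - \<psi> (norm (x i t - x j t)) *\<^sub>R v i t))"
  define attraction where "attraction = (\<Sum>k<N. (\<sigma> / real N) *\<^sub>R
      ((norm (x i t))\<^sup>2 *\<^sub>R x k t - (x i t \<bullet> x k t) *\<^sub>R x i t))"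
  have "accel i t = radial + alignment + attraction"
    unfolding accel_def vrhs_def radial_def alignment_def attraction_def ..
  moreover have "norm radial \<le> real N * E 0"
    unfolding radial_def
    using unit_position[OF assms] speed_squared_bound[OF E_le_E0[OF assms(1)] assms(2)] by simp
  ultimately show ?thesis
    unfolding accel_bound_def
    using norm_alignment_le[OF assms] norm_attraction_le[OF assms] alignment_def attraction_def
      norm_triangle_ineq[of "radial + alignment" attraction] norm_triangle_ineq[of radial alignment]
    by simp
qed

lemma velocity_derivative_bounded:
  assumes "i < N"
  shows "\<exists>D B. (\<forall>t\<ge>0. (v i has_vector_derivative D t) (at t within {0..}))
               \<and> (\<forall>t\<ge>0. norm (D t) \<le> B)"
  using v_deriv norm_accel_le assms by (intro exI[of _ "accel i"] exI[of _ accel_bound]) simp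

lemma rotated_velocity_derivative_bounded:
  assumes "i < N" "j < N"
  shows "\<exists>D B. (\<forall>t\<ge>0. ((\<lambda>s. Rot (x j s) (x i s) *v v j s) has_vector_derivative D t) (at t within {0..}))
               \<and> (\<forall>t\<ge>0. norm (D t) \<le> B)"
proof -
  define L where "L = max 1 (max speed_bound accel_bound)"
  obtain B where B: "\<And>y1 y2 w y1' y2' w'. norm y1 \<le> L \<Longrightarrow> norm y2 \<le> L \<Longrightarrow> norm w \<le> L \<Longrightarrow>
      norm y1' \<le> L \<Longrightarrow> norm y2' \<le> L \<Longrightarrow> norm w' \<le> L \<Longrightarrow> antipodal_gap \<le> 1 + y1 \<bullet> y2 \<Longrightarrow>
      norm (rotate_deriv y1 y2 w y1' y2' w') \<le> B"
    using rotate_deriv_bounded[where L = L, OF antipodal_gap_pos] by blast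
  define D where "D t = rotate_deriv (x j t) (x i t) (v j t) (v j t) (v i t) (accel j t)" for t
  have deriv: "((\<lambda>s. Rot (x j s) (x i s) *v v j s) has_vector_derivative D t) (at t within {0..})"
    if "0 \<le> t" for t
  proof (rule has_vector_derivative_transform)
    fix s :: real assume "s \<in> {0..}"
    then have "0 \<le> s"
      by simp
    show "Rot (x j s) (x i s) *v v j s = rotate (x j s) (x i s) (v j s)"
      by (rule Rot_mult_vec_eq_rotate[OF unit_position[OF \<open>0 \<le> s\<close> assms(2)]
            unit_position[OF \<open>0 \<le> s\<close> assms(1)] not_antipodal[OF \<open>0 \<le> s\<close> assms(2,1)]])
  next
    have "1 + x j t \<bullet> x i t \<noteq> 0"
      using antipodal_gap_le[OF that assms(2,1)] antipodal_gap_pos by linarith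
    then show "((\<lambda>s. rotate (x j s) (x i s) (v j s)) has_vector_derivative D t) (at t within {0..})"
      unfolding D_def
      by (rule has_vector_derivative_rotate[OF x_deriv x_deriv v_deriv, OF assms(2) that assms(1) that assms(2) that])
  qed (use that in simp)
  have bounded_by_L: "norm (x k t) \<le> L \<and> norm (v k t) \<le> L \<and> norm (accel k t) \<le> L"
    if "0 \<le> t" "k < N" for k t
    using unit_position[OF that] speed_le[OF that] norm_accel_le[OF that]
    unfolding L_def by (simp add: le_max_iff_disj)
  have "norm (D t) \<le> B" if "0 \<le> t" for t
    unfolding D_def
    by (rule B) (use bounded_by_L[OF that assms(1)] bounded_by_L[OF that assms(2)]
        antipodal_gap_le[OF that assms(2,1)] in simp_all)
  with deriv show ?thesis
    by blast
qed

end

theorem proposition4p6: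
  fixes N :: nat and \<sigma> :: real and \<psi> \<psi>' :: "real \<Rightarrow> real"
    and x v :: "nat \<Rightarrow> real \<Rightarrow> real^3"
  assumes N: "N \<ge> 1" and sigma: "\<sigma> > 0"
    and psi_nonneg: "\<forall>r\<in>{0..2}. \<psi> r \<ge> 0"
    and psi_decr: "antimono_on {0..2} \<psi>"
    and psi_deriv: "\<forall>r\<in>{0..2}. (\<psi> has_real_derivative \<psi>' r) (at r within {0..2})"
    and psi_C1: "continuous_on {0..2} \<psi>'"
    and psi2: "\<psi> 2 = 0" and dpsi2: "\<psi>' 2 < 0"
    and xdot: "\<forall>i<N. \<forall>t\<ge>0. (x i has_vector_derivative v i t) (at t within {0..})"
    and vdot: "\<forall>i<N. \<forall>t\<ge>0. (v i has_vector_derivative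
                  vrhs N \<sigma> \<psi> (\<lambda>k. x k t) (\<lambda>k. v k t) i) (at t within {0..})"
    and init_norm: "\<forall>i<N. norm (x i 0) = 1"
    and init_tan: "\<forall>i<N. v i 0 \<bullet> x i 0 = 0"
    and energy_small: "2 * \<sigma> > (real N)\<^sup>2 * energy N \<sigma> (\<lambda>k. x k 0) (\<lambda>k. v k 0)"
  shows "(\<forall>i<N. \<exists>D B. (\<forall>t\<ge>0. (v i has_vector_derivative D t) (at t within {0..}))
                          \<and> (\<forall>t\<ge>0. norm (D t) \<le> B)) \<and>
         (\<forall>i<N. \<forall>j<N. \<exists>D B.
           (\<forall>t\<ge>0. ((\<lambda>s. Rot (x j s) (x i s) *v v j s) has_vector_derivative D t) (at t within {0..}))
           \<and> (\<forall>t\<ge>0. norm (D t) \<le> B))"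
proof -
  interpret sphere_flocking N \<sigma> \<psi> x v
    by unfold_locales (fact N sigma psi_nonneg psi_decr xdot vdot init_norm init_tan energy_small)+
  show ?thesis
    by (intro conjI allI impI velocity_derivative_bounded rotated_velocity_derivative_bounded)
qed

end
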